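(* Consider the random intersection graph $G(n,m,F)$ defined in the context, with $m=\lfloor\beta n^\alpha\rfloor$ and $p_i=\gamma W_i n^{-(1+\alpha)/2}\wedge 1$, and assume $F$ has finite mean (normalized to $1$). Let $D_i$ be the degree of vertex $i$. Then for every $\alpha>0$, $\mathbf{E}[D_i\mid W_i]\to\beta\gamma^2W_i$ as $n\to\infty$ (i.e. for every fixed value $w>0$ of $W_i$, with the other weights i.i.d. with distribution $F$, the expected degree of $i$ converges to $\beta\gamma^2 w$).
   Context: Model $G(n,m,F)$: fix constants $\alpha,\beta,\gamma>0$ and a probability distribution $F$ on $(0,\infty)$; if $F$ has finite mean it is assumed to have mean $1$. For a positive integer $n$ let $m=\lfloor\beta n^\alpha\rfloor$, let $\mathcal V=\{1,\dots,n\}$ (vertices, "individuals") and $\mathcal A$ a set of $m$ elements ("groups"). Let $W_1,\dots,W_n$ be i.i.d. with distribution $F$ and set $p_i=\gamma W_i n^{-(1+\alpha)/2}\wedge 1$. Conditionally on the weights, form a bipartite graph $B(n,m,F)$ on $\mathcal V\cup\mathcal A$ by including each edge between $i\in\mathcal V$ and $a\in\mathcal A$ independently with probability $p_i$. The graph $G(n,m,F)$ on $\mathcal V$ has an edge between distinct $i,j$ iff some $a\in\mathcal A$ is adjacent to both $i$ and $j$ in $B(n,m,F)$. The parameters $\alpha,\beta,\gamma,F$ do not depend on $n$. *)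

theory Defs
  imports "HOL-Probability.Probability"
begin

definition num_groups :: "real \<Rightarrow> real \<Rightarrow> nat \<Rightarrow> nat" where
  "num_groups \<alpha> \<beta> n = nat \<lfloor>\<beta> * real n powr \<alpha>\<rfloor>"

definition edge_prob :: "real \<Rightarrow> real \<Rightarrow> nat \<Rightarrow> real \<Rightarrow> real" where
  "edge_prob \<alpha> \<gamma> n x = min (\<gamma> * x * real n powr (- (1 + \<alpha>) / 2)) 1"

definition bip_pmf :: "nat \<Rightarrow> nat \<Rightarrow> (nat \<Rightarrow> real) \<Rightarrow> (nat \<times> nat \<Rightarrow> bool) pmf" where
  "bip_pmf n m q = Pi_pmf ({1..n} \<times> {..<m}) False (\<lambda>(i, a). bernoulli_pmf (q i))"

definition int_degree :: "nat \<Rightarrow> nat \<Rightarrow> (nat \<times> nat \<Rightarrow> bool) \<Rightarrow> nat \<Rightarrow> nat" where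
  "int_degree n m B i = card {j \<in> {1..n}. j \<noteq> i \<and> (\<exists>a<m. B (i, a) \<and> B (j, a))}"

text \<open>E[D_i | W_i = w]: weight of i fixed to w, the other weights i.i.d. with law F.\<close>
definition cond_exp_degree ::
  "real \<Rightarrow> real \<Rightarrow> real \<Rightarrow> real measure \<Rightarrow> nat \<Rightarrow> nat \<Rightarrow> real \<Rightarrow> real" where
  "cond_exp_degree \<alpha> \<beta> \<gamma> F n i w =
     (\<integral>W. measure_pmf.expectation
            (bip_pmf n (num_groups \<alpha> \<beta> n) (\<lambda>k. edge_prob \<alpha> \<gamma> n ((W(i := w)) k)))
            (\<lambda>B. real (int_degree n (num_groups \<alpha> \<beta> n) B i))
      \<partial>(PiM ({1..n} - {i}) (\<lambda>_. F)))"

end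

theory Submission
  imports Defs
begin

text \<open>Given the weights, vertices \<open>i\<close> and \<open>j\<close> share none of the \<open>m\<close> groups with probability
  \<open>(1 - p\<^sub>i p\<^sub>j)\<^sup>m\<close>, so \<open>E[D\<^sub>i | W] = \<Sum>\<^sub>j (1 - (1 - p\<^sub>i p\<^sub>j)\<^sup>m)\<close>. For fixed weights
  \<open>m p\<^sub>i p\<^sub>j \<sim> \<beta>\<gamma>\<^sup>2 W\<^sub>i W\<^sub>j / n \<rightarrow> 0\<close>, and \<open>m t (1 - m t) \<le> 1 - (1 - t)\<^sup>m \<le> m t\<close>, so \<open>n\<close> times a summand
  tends to \<open>\<beta>\<gamma>\<^sup>2 W\<^sub>i W\<^sub>j\<close> while staying below \<open>\<beta>\<gamma>\<^sup>2 W\<^sub>i |W\<^sub>j|\<close>. Dominated convergence against the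
  integrable weight then gives \<open>E[D\<^sub>i | W\<^sub>i = w] \<rightarrow> \<beta>\<gamma>\<^sup>2 w E[W] = \<beta>\<gamma>\<^sup>2 w\<close>.\<close>

lemma integrable_measure_pmf_unit_interval:
  fixes g :: "'a \<Rightarrow> real"
  assumes "\<And>x. 0 \<le> g x" "\<And>x. g x \<le> 1"
  shows "integrable (measure_pmf M) g"
  by (intro measure_pmf.integrable_const_bound[where B=1]) (use assms in auto)

lemma expectation_pair_pmf_iterated:
  fixes f :: "'a \<times> 'b \<Rightarrow> real"
  assumes f0: "\<And>x. 0 \<le> f x" and f1: "\<And>x. f x \<le> 1"
  shows "measure_pmf.expectation (pair_pmf A B) f =
         measure_pmf.expectation A (\<lambda>a. measure_pmf.expectation B (\<lambda>b. f (a, b)))"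
proof -
  have inner0: "0 \<le> measure_pmf.expectation B (\<lambda>b. f (a, b))" for a
    by (intro Bochner_Integration.integral_nonneg f0)
  have inner1: "measure_pmf.expectation B (\<lambda>b. f (a, b)) \<le> 1" for a
    using integral_mono[of B "\<lambda>b. f (a, b)" "\<lambda>_. 1"]
    by (simp add: integrable_measure_pmf_unit_interval f0 f1)
  have "ennreal (measure_pmf.expectation (pair_pmf A B) f) = (\<integral>\<^sup>+x. ennreal (f x) \<partial>pair_pmf A B)"
    by (intro nn_integral_eq_integral[symmetric] integrable_measure_pmf_unit_interval f0 f1 AE_I2)
  also have "\<dots> = (\<integral>\<^sup>+a. \<integral>\<^sup>+b. ennreal (f (a, b)) \<partial>B \<partial>A)"
    by (rule nn_integral_pair_pmf')
  also have "\<dots> = (\<integral>\<^sup>+a. ennreal (measure_pmf.expectation B (\<lambda>b. f (a, b))) \<partial>A)"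
    by (intro nn_integral_cong nn_integral_eq_integral integrable_measure_pmf_unit_interval f0 f1 AE_I2)
  also have "\<dots> = ennreal (measure_pmf.expectation A (\<lambda>a. measure_pmf.expectation B (\<lambda>b. f (a, b))))"
    by (intro nn_integral_eq_integral integrable_measure_pmf_unit_interval inner0 inner1 AE_I2)
  finally show ?thesis
    by (subst (asm) ennreal_inj) (auto intro!: Bochner_Integration.integral_nonneg inner0 f0)
qed

lemma expectation_Pi_pmf_prod_subset:
  fixes f :: "'a \<Rightarrow> 'b \<Rightarrow> real"
  assumes A: "finite A" and S: "S \<subseteq> A"
    and f0: "\<And>x v. 0 \<le> f x v" and f1: "\<And>x v. f x v \<le> 1"
  shows "measure_pmf.expectation (Pi_pmf A d p) (\<lambda>y. \<Prod>x\<in>S. f x (y x)) =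
         (\<Prod>x\<in>S. measure_pmf.expectation (p x) (f x))"
proof -
  have "finite S" using A S by (rule rev_finite_subset)
  have "measure_pmf.expectation (Pi_pmf A d p) (\<lambda>y. \<Prod>x\<in>S. f x (y x)) =
        measure_pmf.expectation (Pi_pmf S d p) (\<lambda>y. \<Prod>x\<in>S. f x (y x))"
    unfolding Pi_pmf_subset[OF A S] integral_map_pmf
    by (intro Bochner_Integration.integral_cong refl prod.cong) auto
  also have "\<dots> = (\<Prod>x\<in>S. measure_pmf.expectation (p x) (f x))"
    by (intro expectation_prod_Pi_pmf \<open>finite S\<close> integrable_measure_pmf_unit_interval f0 f1)
  finally show ?thesis .
qed

lemma expectation_Pi_pmf_row_prod:
  fixes f :: "nat \<Rightarrow> 'b \<Rightarrow> real"
  assumes "finite A" "{k} \<times> {..<m} \<subseteq> A"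
    and "\<And>a v. 0 \<le> f a v" "\<And>a v. f a v \<le> 1"
  shows "measure_pmf.expectation (Pi_pmf A d p) (\<lambda>y. \<Prod>a<m. f a (y (k, a))) =
         (\<Prod>a<m. measure_pmf.expectation (p (k, a)) (f a))"
proof -
  have "{k} \<times> {..<m} = Pair k ` {..<m}" by auto
  with expectation_Pi_pmf_prod_subset[OF assms(1,2), of "\<lambda>x. f (snd x)" d p] assms(3,4)
  show ?thesis by (simp add: prod.reindex inj_on_def)
qed

lemma expectation_no_common_group:
  fixes P :: "'a \<Rightarrow> real"
  assumes V: "finite V" and ij: "i \<in> V" "j \<in> V" "i \<noteq> j"
    and P0: "\<And>k. 0 \<le> P k" and P1: "\<And>k. P k \<le> 1"
  shows "measure_pmf.expectation (Pi_pmf (V \<times> {..<m}) False (\<lambda>(k, a). bernoulli_pmf (P k)))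
           (\<lambda>B. \<Prod>a<m. 1 - of_bool (B (i, a) \<and> B (j, a))) = (1 - P i * P j) ^ m"
proof -
  define D :: "'a \<times> nat \<Rightarrow> bool pmf" where "D = (\<lambda>(k, a). bernoulli_pmf (P k))"
  define Rj where "Rj = {j} \<times> {..<m}"
  define R where "R = (V - {j}) \<times> {..<m}"
  have fin: "finite Rj" "finite R" using V by (auto simp: Rj_def R_def)
  have split: "V \<times> {..<m} = Rj \<union> R" "Rj \<inter> R = {}" using ij by (auto simp: Rj_def R_def)
  \<comment> \<open>Condition on the memberships \<open>Rj\<close> of \<open>j\<close>; the remaining factors then depend on distinct
     independent coordinates \<open>(i, a)\<close>.\<close>
  have "measure_pmf.expectation (Pi_pmf (V \<times> {..<m}) False D)
          (\<lambda>B. \<Prod>a<m. 1 - of_bool (B (i, a) \<and> B (j, a)) :: real) =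
        measure_pmf.expectation (pair_pmf (Pi_pmf Rj False D) (Pi_pmf R False D))
          (\<lambda>fg. \<Prod>a<m. 1 - of_bool (snd fg (i, a) \<and> fst fg (j, a)))"
    unfolding split(1) Pi_pmf_union[OF fin split(2)]
    by (subst integral_map_pmf, intro Bochner_Integration.integral_cong refl prod.cong)
       (use ij in \<open>auto simp: Rj_def\<close>)
  also have "\<dots> = measure_pmf.expectation (Pi_pmf Rj False D) (\<lambda>f.
          measure_pmf.expectation (Pi_pmf R False D) (\<lambda>g. \<Prod>a<m. 1 - of_bool (g (i, a) \<and> f (j, a))))"
    by (subst expectation_pair_pmf_iterated) (auto intro!: prod_nonneg prod_le_1)
  also have "\<dots> = measure_pmf.expectation (Pi_pmf Rj False D) (\<lambda>f. \<Prod>a<m. 1 - P i * of_bool (f (j, a)))"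
  proof (intro Bochner_Integration.integral_cong refl)
    fix f :: "'a \<times> nat \<Rightarrow> bool"
    have "{i} \<times> {..<m} \<subseteq> R" using ij by (auto simp: R_def)
    then show "measure_pmf.expectation (Pi_pmf R False D)
                 (\<lambda>g. \<Prod>a<m. 1 - of_bool (g (i, a) \<and> f (j, a))) = (\<Prod>a<m. 1 - P i * of_bool (f (j, a)))"
      by (subst expectation_Pi_pmf_row_prod[OF fin(2)]) (auto simp: D_def P0 P1 algebra_simps)
  qed
  also have "\<dots> = (\<Prod>a<m. 1 - P i * P j)"
    by (subst expectation_Pi_pmf_row_prod[OF fin(1)])
       (auto simp: Rj_def D_def P0 P1 mult_le_one algebra_simps)
  finally show ?thesis by (simp add: D_def)
qed

text \<open>Edge probabilities of nonpositive weights are negative; \<open>bernoulli_pmf\<close> silently clips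
  its parameter to \<open>[0, 1]\<close>, and so do the formulas below.\<close>

definition clamp01 :: "real \<Rightarrow> real" where
  "clamp01 x = max 0 (min 1 x)"

lemma clamp01_bounds [simp]: "0 \<le> clamp01 x" "clamp01 x \<le> 1"
  by (auto simp: clamp01_def)

lemma bernoulli_pmf_clamp01: "bernoulli_pmf (clamp01 p) = bernoulli_pmf p"
  by (rule pmf_eqI) (simp add: bernoulli_pmf.rep_eq clamp01_def split: split_max split_min)

lemma of_bool_ex_less_eq_one_minus_prod:
  fixes m :: nat
  shows "(of_bool (\<exists>a<m. Q a) :: 'a :: comm_ring_1) = 1 - (\<Prod>a<m. 1 - of_bool (Q a))"
proof (cases "\<exists>a<m. Q a")
  case True
  then obtain a where "a < m" "Q a" by blast
  then have "(\<Prod>a<m. 1 - of_bool (Q a) :: 'a) = 0" by (intro prod_zero) auto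
  with True show ?thesis by simp
qed simp

lemma int_degree_eq_sum:
  "real (int_degree n m B i) = (\<Sum>j\<in>{1..n} - {i}. 1 - (\<Prod>a<m. 1 - of_bool (B (i, a) \<and> B (j, a))))"
proof -
  have "{j \<in> {1..n}. j \<noteq> i \<and> (\<exists>a<m. B (i, a) \<and> B (j, a))} =
        ({1..n} - {i}) \<inter> {j. \<exists>a<m. B (i, a) \<and> B (j, a)}" by auto
  then show ?thesis
    by (simp add: int_degree_def flip: of_bool_ex_less_eq_one_minus_prod)
qed

lemma expectation_int_degree:
  assumes i: "i \<in> {1..n}"
  shows "measure_pmf.expectation (bip_pmf n m q) (\<lambda>B. real (int_degree n m B i)) =
         (\<Sum>j\<in>{1..n} - {i}. 1 - (1 - clamp01 (q i) * clamp01 (q j)) ^ m)"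
proof -
  define P where "P k = clamp01 (q k)" for k
  have bip: "bip_pmf n m q = Pi_pmf ({1..n} \<times> {..<m}) False (\<lambda>(k, a). bernoulli_pmf (P k))"
    unfolding bip_pmf_def P_def bernoulli_pmf_clamp01 by (simp add: case_prod_unfold)
  have no_common: "measure_pmf.expectation (bip_pmf n m q)
          (\<lambda>B. \<Prod>a<m. 1 - of_bool (B (i, a) \<and> B (j, a))) = (1 - P i * P j) ^ m"
    if "j \<in> {1..n} - {i}" for j
    unfolding bip using i that by (intro expectation_no_common_group) (auto simp: P_def)
  have integrable_no_common:
    "integrable (bip_pmf n m q) (\<lambda>B. \<Prod>a<m. 1 - of_bool (B (i, a) \<and> B (j, a)) :: real)" for j
    by (intro integrable_measure_pmf_unit_interval prod_nonneg prod_le_1) auto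
  have "measure_pmf.expectation (bip_pmf n m q) (\<lambda>B. real (int_degree n m B i)) =
        (\<Sum>j\<in>{1..n} - {i}. 1 - measure_pmf.expectation (bip_pmf n m q)
             (\<lambda>B. \<Prod>a<m. 1 - of_bool (B (i, a) \<and> B (j, a))))"
    unfolding int_degree_eq_sum
    by (simp add: integrable_no_common Bochner_Integration.integral_sum)
  also have "\<dots> = (\<Sum>j\<in>{1..n} - {i}. 1 - (1 - P i * P j) ^ m)"
    by (intro sum.cong refl) (simp add: no_common)
  finally show ?thesis by (simp add: P_def)
qed

lemma one_minus_power_le:
  fixes t :: real
  assumes "0 \<le> t" "t \<le> 1"
  shows "1 - (1 - t) ^ m \<le> real m * t"
  using Bernoulli_inequality[of "-t" m] assms by simp

lemma one_minus_power_ge: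
  fixes t :: real
  assumes t: "0 \<le> t" "t \<le> 1"
  shows "real m * t * (1 - real m * t) \<le> 1 - (1 - t) ^ m"
proof -
  have "(1 - t) ^ m \<ge> 1 - real m * t"
    using Bernoulli_inequality[of "-t" m] t by simp
  then have "(1 - t) ^ j \<ge> 1 - real m * t" if "j < m" for j
    using that t power_decreasing[of j m "1 - t"] by simp
  then have "(\<Sum>j<m. (1 - t) ^ j) \<ge> real m * (1 - real m * t)"
    using sum_mono[of "{..<m}" "\<lambda>_. 1 - real m * t" "\<lambda>j. (1 - t) ^ j"] by simp
  moreover have "1 - (1 - t) ^ m = t * (\<Sum>j<m. (1 - t) ^ j)"
    using one_diff_power_eq[of "1 - t" m] by simp
  ultimately show ?thesis
    using mult_left_mono t(1) by (metis mult.assoc mult.commute)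
qed

lemma num_groups_normalized_bounds:
  assumes "0 \<le> \<beta>" "0 < n"
  shows "\<beta> - real n powr (-\<alpha>) \<le> real (num_groups \<alpha> \<beta> n) * real n powr (-\<alpha>)"
    and "real (num_groups \<alpha> \<beta> n) * real n powr (-\<alpha>) \<le> \<beta>"
proof -
  have floor: "\<beta> * real n powr \<alpha> - 1 \<le> real (num_groups \<alpha> \<beta> n)"
              "real (num_groups \<alpha> \<beta> n) \<le> \<beta> * real n powr \<alpha>"
    using assms(1) by (simp_all add: num_groups_def)
  have cancel: "real n powr \<alpha> * real n powr (-\<alpha>) = 1"
    using assms(2) by (simp add: powr_minus)
  show "\<beta> - real n powr (-\<alpha>) \<le> real (num_groups \<alpha> \<beta> n) * real n powr (-\<alpha>)"
    using mult_right_mono[OF floor(1), of "real n powr (-\<alpha>)"] cancel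
    by (simp add: algebra_simps)
  show "real (num_groups \<alpha> \<beta> n) * real n powr (-\<alpha>) \<le> \<beta>"
    using mult_right_mono[OF floor(2), of "real n powr (-\<alpha>)"] cancel
    by (simp add: algebra_simps)
qed

lemma num_groups_normalized_tendsto:
  assumes "0 < \<alpha>" "0 \<le> \<beta>"
  shows "(\<lambda>n. real (num_groups \<alpha> \<beta> n) * real n powr (-\<alpha>)) \<longlonglongrightarrow> \<beta>"
proof (rule tendsto_sandwich)
  have "(\<lambda>n. real n powr (-\<alpha>)) \<longlonglongrightarrow> 0"
    using assms(1) by (intro tendsto_neg_powr filterlim_real_sequentially) auto
  then show "(\<lambda>n. \<beta> - real n powr (-\<alpha>)) \<longlonglongrightarrow> \<beta>"
    using tendsto_diff[OF tendsto_const] by fastforce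
  show "eventually (\<lambda>n. \<beta> - real n powr (-\<alpha>) \<le> real (num_groups \<alpha> \<beta> n) * real n powr (-\<alpha>)) sequentially"
    using eventually_gt_at_top[of 0] by eventually_elim (rule num_groups_normalized_bounds(1)[OF assms(2)])
  show "eventually (\<lambda>n. real (num_groups \<alpha> \<beta> n) * real n powr (-\<alpha>) \<le> \<beta>) sequentially"
    using eventually_gt_at_top[of 0] by eventually_elim (rule num_groups_normalized_bounds(2)[OF assms(2)])
qed simp

lemma powr_minus_one_plus:
  "real n powr (-(1 + \<alpha>)) = real n powr (-\<alpha>) / real n"
proof (cases "n = 0")
  case False
  have "-(1 + \<alpha>) = -\<alpha> + -1" by simp
  with False show ?thesis by (simp only: powr_add powr_neg_one) simp
qed simp

lemma num_groups_scaled_le: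
  assumes "0 \<le> \<beta>"
  shows "real (n - 1) * real (num_groups \<alpha> \<beta> n) * real n powr (-(1 + \<alpha>)) \<le> \<beta>"
proof (cases "n = 0")
  case False
  have "real (n - 1) * real (num_groups \<alpha> \<beta> n) * real n powr (-(1 + \<alpha>)) =
        (real (n - 1) / real n) * (real (num_groups \<alpha> \<beta> n) * real n powr (-\<alpha>))"
    unfolding powr_minus_one_plus by simp
  also have "\<dots> \<le> 1 * \<beta>"
    using False by (intro mult_mono num_groups_normalized_bounds(2) assms) (auto simp: divide_le_eq_1)
  finally show ?thesis by simp
qed (simp add: assms)

lemma num_groups_scaled_tendsto:
  assumes "0 < \<alpha>" "0 \<le> \<beta>"
  shows "(\<lambda>n. real (n - 1) * real (num_groups \<alpha> \<beta> n) * real n powr (-(1 + \<alpha>))) \<longlonglongrightarrow> \<beta>"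
proof -
  have "(\<lambda>n. (1 - 1 / real n) * (real (num_groups \<alpha> \<beta> n) * real n powr (-\<alpha>))) \<longlonglongrightarrow> (1 - 0) * \<beta>"
    by (intro tendsto_intros num_groups_normalized_tendsto assms lim_inverse_n')
  moreover have "eventually (\<lambda>n. (1 - 1 / real n) * (real (num_groups \<alpha> \<beta> n) * real n powr (-\<alpha>)) =
      real (n - 1) * real (num_groups \<alpha> \<beta> n) * real n powr (-(1 + \<alpha>))) sequentially"
    using eventually_gt_at_top[of 0]
    by eventually_elim (unfold powr_minus_one_plus, simp add: field_simps)
  ultimately show ?thesis by (simp add: Lim_transform_eventually)
qed

lemma num_groups_scaled_tendsto_zero:
  assumes "0 < \<alpha>" "0 \<le> \<beta>"
  shows "(\<lambda>n. real (num_groups \<alpha> \<beta> n) * real n powr (-(1 + \<alpha>))) \<longlonglongrightarrow> 0"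
proof -
  have "(\<lambda>n. real (num_groups \<alpha> \<beta> n) * real n powr (-\<alpha>) * (1 / real n)) \<longlonglongrightarrow> \<beta> * 0"
    by (intro tendsto_intros num_groups_normalized_tendsto assms lim_inverse_n')
  then show ?thesis unfolding powr_minus_one_plus by simp
qed

lemma clamp_edge_prob_le:
  assumes "0 \<le> \<gamma>"
  shows "clamp01 (edge_prob \<alpha> \<gamma> n x) \<le> \<gamma> * \<bar>x\<bar> * real n powr (-(1 + \<alpha>) / 2)"
proof -
  have "\<gamma> * x * real n powr (-(1 + \<alpha>) / 2) \<le> \<gamma> * \<bar>x\<bar> * real n powr (-(1 + \<alpha>) / 2)"
    using assms by (intro mult_right_mono mult_left_mono) auto
  moreover have "0 \<le> \<gamma> * \<bar>x\<bar> * real n powr (-(1 + \<alpha>) / 2)"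
    using assms by simp
  ultimately show ?thesis by (auto simp: clamp01_def edge_prob_def)
qed

lemma clamp_edge_prob_eventually_eq:
  assumes "0 < \<alpha>" "0 \<le> \<gamma>" "0 < x"
  shows "eventually (\<lambda>n. clamp01 (edge_prob \<alpha> \<gamma> n x) = \<gamma> * x * real n powr (-(1 + \<alpha>) / 2)) sequentially"
proof -
  have "(\<lambda>n. real n powr (-(1 + \<alpha>) / 2)) \<longlonglongrightarrow> 0"
    using assms(1) by (intro tendsto_neg_powr filterlim_real_sequentially) auto
  then have "(\<lambda>n. \<gamma> * x * real n powr (-(1 + \<alpha>) / 2)) \<longlonglongrightarrow> \<gamma> * x * 0"
    by (intro tendsto_mult tendsto_const)
  then have "eventually (\<lambda>n. \<gamma> * x * real n powr (-(1 + \<alpha>) / 2) < 1) sequentially"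
    by (intro order_tendstoD(2)) auto
  then show ?thesis
    by eventually_elim (use assms in \<open>auto simp: clamp01_def edge_prob_def\<close>)
qed

lemma powr_half_times_powr_half:
  "real n powr (-(1 + \<alpha>) / 2) * real n powr (-(1 + \<alpha>) / 2) = real n powr (-(1 + \<alpha>))"
  by (simp add: powr_add[symmetric])

definition common_group_prob :: "real \<Rightarrow> real \<Rightarrow> real \<Rightarrow> nat \<Rightarrow> real \<Rightarrow> real \<Rightarrow> real" where
  "common_group_prob \<alpha> \<beta> \<gamma> n w x =
     1 - (1 - clamp01 (edge_prob \<alpha> \<gamma> n w) * clamp01 (edge_prob \<alpha> \<gamma> n x)) ^ num_groups \<alpha> \<beta> n"

lemma common_group_prob_bounds:
  "0 \<le> common_group_prob \<alpha> \<beta> \<gamma> n w x" "common_group_prob \<alpha> \<beta> \<gamma> n w x \<le> 1"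
  by (auto simp: common_group_prob_def mult_le_one intro!: power_le_one)

lemma borel_measurable_common_group_prob [measurable]:
  "common_group_prob \<alpha> \<beta> \<gamma> n w \<in> borel_measurable borel"
  unfolding common_group_prob_def[abs_def] clamp01_def edge_prob_def by measurable

lemma common_group_prob_scaled_le:
  assumes \<beta>: "0 \<le> \<beta>" and \<gamma>: "0 \<le> \<gamma>" and w: "0 \<le> w"
  shows "real (n - 1) * common_group_prob \<alpha> \<beta> \<gamma> n w x \<le> \<beta> * \<gamma>\<^sup>2 * w * \<bar>x\<bar>"
proof -
  define p where "p = clamp01 (edge_prob \<alpha> \<gamma> n w) * clamp01 (edge_prob \<alpha> \<gamma> n x)"
  have "p \<le> (\<gamma> * \<bar>w\<bar> * real n powr (-(1 + \<alpha>) / 2)) * (\<gamma> * \<bar>x\<bar> * real n powr (-(1 + \<alpha>) / 2))"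
    unfolding p_def using \<gamma> by (intro mult_mono clamp_edge_prob_le) auto
  also have "\<dots> = \<gamma>\<^sup>2 * w * \<bar>x\<bar> * real n powr (-(1 + \<alpha>))"
    unfolding powr_half_times_powr_half[symmetric] using w by (simp add: power2_eq_square)
  finally have p: "p \<le> \<gamma>\<^sup>2 * w * \<bar>x\<bar> * real n powr (-(1 + \<alpha>))" .
  have "common_group_prob \<alpha> \<beta> \<gamma> n w x \<le> real (num_groups \<alpha> \<beta> n) * p"
    unfolding common_group_prob_def p_def by (intro one_minus_power_le) (auto intro: mult_le_one)
  also have "\<dots> \<le> real (num_groups \<alpha> \<beta> n) * (\<gamma>\<^sup>2 * w * \<bar>x\<bar> * real n powr (-(1 + \<alpha>)))"
    using p by (rule mult_left_mono) simp
  finally have "real (n - 1) * common_group_prob \<alpha> \<beta> \<gamma> n w x \<le>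
             real (n - 1) * (real (num_groups \<alpha> \<beta> n) * (\<gamma>\<^sup>2 * w * \<bar>x\<bar> * real n powr (-(1 + \<alpha>))))"
    by (rule mult_left_mono) simp
  also have "\<dots> = (real (n - 1) * real (num_groups \<alpha> \<beta> n) * real n powr (-(1 + \<alpha>))) * (\<gamma>\<^sup>2 * w * \<bar>x\<bar>)"
    by (simp only: mult_ac)
  also have "\<dots> \<le> \<beta> * (\<gamma>\<^sup>2 * w * \<bar>x\<bar>)"
    using w by (intro mult_right_mono num_groups_scaled_le \<beta>) auto
  finally show ?thesis by (simp only: mult_ac)
qed

lemma common_group_prob_scaled_tendsto:
  assumes \<alpha>: "0 < \<alpha>" and \<beta>: "0 \<le> \<beta>" and \<gamma>: "0 \<le> \<gamma>" and w: "0 < w" and x: "0 < x"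
  shows "(\<lambda>n. real (n - 1) * common_group_prob \<alpha> \<beta> \<gamma> n w x) \<longlonglongrightarrow> \<beta> * \<gamma>\<^sup>2 * w * x"
proof -
  define K where "K = \<gamma>\<^sup>2 * w * x"
  define M where "M n = real (num_groups \<alpha> \<beta> n)" for n
  define p where "p n = clamp01 (edge_prob \<alpha> \<gamma> n w) * clamp01 (edge_prob \<alpha> \<gamma> n x)" for n
  have p_eq: "eventually (\<lambda>n. p n = K * real n powr (-(1 + \<alpha>))) sequentially"
    using clamp_edge_prob_eventually_eq[OF \<alpha> \<gamma> w] clamp_edge_prob_eventually_eq[OF \<alpha> \<gamma> x]
  proof eventually_elim
    case (elim n)
    then show ?case
      unfolding p_def K_def powr_half_times_powr_half[symmetric] by (simp add: power2_eq_square)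
  qed
  define U where "U n = K * (real (n - 1) * M n * real n powr (-(1 + \<alpha>)))" for n
  define V where "V n = K * (M n * real n powr (-(1 + \<alpha>)))" for n
  have U: "U \<longlonglongrightarrow> K * \<beta>"
    unfolding U_def M_def by (intro tendsto_mult tendsto_const num_groups_scaled_tendsto \<alpha> \<beta>)
  have V: "V \<longlonglongrightarrow> K * 0"
    unfolding V_def M_def by (intro tendsto_mult tendsto_const num_groups_scaled_tendsto_zero \<alpha> \<beta>)
  have upper: "eventually (\<lambda>n. real (n - 1) * common_group_prob \<alpha> \<beta> \<gamma> n w x \<le> U n) sequentially"
    using p_eq
  proof eventually_elim
    case (elim n)
    have "common_group_prob \<alpha> \<beta> \<gamma> n w x \<le> M n * p n"
      unfolding common_group_prob_def M_def p_def by (intro one_minus_power_le) (auto intro: mult_le_one)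
    then have "real (n - 1) * common_group_prob \<alpha> \<beta> \<gamma> n w x \<le> real (n - 1) * (M n * p n)"
      by (rule mult_left_mono) simp
    also have "\<dots> = U n" by (simp only: elim U_def mult_ac)
    finally show ?case .
  qed
  have lower: "eventually (\<lambda>n. U n * (1 - V n) \<le> real (n - 1) * common_group_prob \<alpha> \<beta> \<gamma> n w x) sequentially"
    using p_eq
  proof eventually_elim
    case (elim n)
    have "U n * (1 - V n) = real (n - 1) * (M n * p n * (1 - M n * p n))"
      by (simp only: elim U_def V_def mult_ac)
    also have "M n * p n * (1 - M n * p n) \<le> common_group_prob \<alpha> \<beta> \<gamma> n w x"
      unfolding common_group_prob_def M_def p_def by (intro one_minus_power_ge) (auto intro: mult_le_one)
    finally show ?case by (simp add: mult_left_mono)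
  qed
  have "(\<lambda>n. U n * (1 - V n)) \<longlonglongrightarrow> K * \<beta> * (1 - K * 0)"
    by (intro tendsto_intros U V)
  then have lower_lim: "(\<lambda>n. U n * (1 - V n)) \<longlonglongrightarrow> \<beta> * \<gamma>\<^sup>2 * w * x"
    by (simp add: K_def mult_ac)
  have upper_lim: "U \<longlonglongrightarrow> \<beta> * \<gamma>\<^sup>2 * w * x"
    using U by (simp add: K_def mult_ac)
  show ?thesis
    by (rule tendsto_sandwich[OF lower upper lower_lim upper_lim])
qed

lemma
  fixes f :: "'b \<Rightarrow> real"
  assumes F: "prob_space F" and j: "j \<in> I" and f: "integrable F f"
  shows integrable_PiM_component: "integrable (PiM I (\<lambda>_. F)) (\<lambda>W. f (W j))"
    and integral_PiM_component: "(\<integral>W. f (W j) \<partial>PiM I (\<lambda>_. F)) = (\<integral>x. f x \<partial>F)"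
proof -
  have distr: "distr (PiM I (\<lambda>_. F)) F (\<lambda>W. W j) = F"
    using F j by (intro distr_PiM_component) auto
  have comp: "(\<lambda>W. W j) \<in> measurable (PiM I (\<lambda>_. F)) F"
    using j by (rule measurable_component_singleton)
  have f_meas: "f \<in> borel_measurable F"
    using f by (rule borel_measurable_integrable)
  show "integrable (PiM I (\<lambda>_. F)) (\<lambda>W. f (W j))"
    using f integrable_distr_eq[OF comp f_meas] by (simp add: distr)
  show "(\<integral>W. f (W j) \<partial>PiM I (\<lambda>_. F)) = (\<integral>x. f x \<partial>F)"
    using integral_distr[OF comp f_meas] by (simp add: distr)
qed

lemma cond_exp_degree_eq_integral:
  assumes F: "prob_space F" "sets F = sets borel" and i: "i \<in> {1..n}"
  shows "cond_exp_degree \<alpha> \<beta> \<gamma> F n i w = real (n - 1) * (\<integral>x. common_group_prob \<alpha> \<beta> \<gamma> n w x \<partial>F)"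
proof -
  let ?g = "common_group_prob \<alpha> \<beta> \<gamma> n w"
  have g_int: "integrable F ?g"
    using F by (intro finite_measure.integrable_const_bound[where B=1] prob_space.finite_measure)
      (auto simp: measurable_cong_sets[OF F(2) refl] common_group_prob_bounds)
  have inner: "measure_pmf.expectation
      (bip_pmf n (num_groups \<alpha> \<beta> n) (\<lambda>k. edge_prob \<alpha> \<gamma> n ((W(i := w)) k)))
      (\<lambda>B. real (int_degree n (num_groups \<alpha> \<beta> n) B i)) = (\<Sum>j\<in>{1..n} - {i}. ?g (W j))" for W
    by (subst expectation_int_degree[OF i]) (auto intro!: sum.cong simp: common_group_prob_def)
  have "cond_exp_degree \<alpha> \<beta> \<gamma> F n i w = (\<Sum>j\<in>{1..n} - {i}. \<integral>W. ?g (W j) \<partial>PiM ({1..n} - {i}) (\<lambda>_. F))"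
    unfolding cond_exp_degree_def inner
    by (intro Bochner_Integration.integral_sum integrable_PiM_component[OF F(1) _ g_int])
  also have "\<dots> = (\<Sum>j\<in>{1..n} - {i}. \<integral>x. ?g x \<partial>F)"
    by (intro sum.cong refl integral_PiM_component[OF F(1) _ g_int])
  also have "\<dots> = real (n - 1) * (\<integral>x. ?g x \<partial>F)"
    using i by simp
  finally show ?thesis .
qed

lemma integral_common_group_prob_scaled_tendsto:
  fixes F :: "real measure"
  assumes \<alpha>: "0 < \<alpha>" and \<beta>: "0 \<le> \<beta>" and \<gamma>: "0 \<le> \<gamma>" and w: "0 < w"
    and F: "sets F = sets borel" and pos: "AE x in F. 0 < x" and int_x: "integrable F (\<lambda>x. x)"
  shows "(\<lambda>n. real (n - 1) * (\<integral>x. common_group_prob \<alpha> \<beta> \<gamma> n w x \<partial>F))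
           \<longlonglongrightarrow> \<beta> * \<gamma>\<^sup>2 * w * (\<integral>x. x \<partial>F)"
proof -
  let ?c = "\<beta> * \<gamma>\<^sup>2 * w"
  let ?s = "\<lambda>n x. real (n - 1) * common_group_prob \<alpha> \<beta> \<gamma> n w x"
  have "(\<lambda>n. \<integral>x. ?s n x \<partial>F) \<longlonglongrightarrow> (\<integral>x. ?c * x \<partial>F)"
  proof (rule integral_dominated_convergence)
    show "(\<lambda>x. ?c * x) \<in> borel_measurable F" "?s n \<in> borel_measurable F" for n
      using borel_measurable_integrable[OF int_x] by (simp_all add: measurable_cong_sets[OF F refl])
    show "integrable F (\<lambda>x. ?c * \<bar>x\<bar>)"
      using int_x by (intro integrable_mult_right integrable_abs)
    show "AE x in F. (\<lambda>n. ?s n x) \<longlonglongrightarrow> ?c * x"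
      using pos by eventually_elim (rule common_group_prob_scaled_tendsto[OF \<alpha> \<beta> \<gamma> w])
    show "AE x in F. norm (?s n x) \<le> ?c * \<bar>x\<bar>" for n
      using common_group_prob_scaled_le[OF \<beta> \<gamma>, of w n \<alpha>] w
      by (intro AE_I2) (simp add: common_group_prob_bounds)
  qed
  then show ?thesis by simp
qed

theorem proposition1p1:
  fixes \<alpha> \<beta> \<gamma> w :: real and F :: "real measure" and i :: nat
  assumes "\<alpha> > 0" and "\<beta> > 0" and "\<gamma> > 0"
    and "prob_space F" and "sets F = sets borel"
    and "AE x in F. x > 0"
    and "integrable F (\<lambda>x. x)" and "(\<integral>x. x \<partial>F) = 1"
    and "i \<ge> 1" and "w > 0"
  shows "(\<lambda>n. cond_exp_degree \<alpha> \<beta> \<gamma> F n i w) \<longlonglongrightarrow> \<beta> * \<gamma>\<^sup>2 * w"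
proof -
  have "(\<lambda>n. real (n - 1) * (\<integral>x. common_group_prob \<alpha> \<beta> \<gamma> n w x \<partial>F)) \<longlonglongrightarrow> \<beta> * \<gamma>\<^sup>2 * w"
    using integral_common_group_prob_scaled_tendsto[of \<alpha> \<beta> \<gamma> w F] assms by simp
  moreover have "eventually (\<lambda>n. real (n - 1) * (\<integral>x. common_group_prob \<alpha> \<beta> \<gamma> n w x \<partial>F) =
      cond_exp_degree \<alpha> \<beta> \<gamma> F n i w) sequentially"
    using eventually_ge_at_top[of i]
    by eventually_elim (use assms in \<open>simp add: cond_exp_degree_eq_integral\<close>)
  ultimately show ?thesis
    by (rule Lim_transform_eventually)
qed

end
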